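(* Let $\{|j\rangle\}_{j=1}^n$ be a fixed orthonormal (reference) basis of an $n$-dimensional Hilbert space, and let $Z_1,\dots,Z_n$ be Hermitian operators, all diagonal in the reference basis, with $\operatorname{tr}Z_jZ_k=\delta_{jk}$. Define, for a state $\rho$, \[ \mathcal{C}(\rho):=\min_{\{p_l,|\psi_l\rangle\}}\sum_lp_l\,\mathcal{F}_1\Big(e^{i\sum_j\theta_jZ_j}|\psi_l\rangle\langle\psi_l|e^{-i\sum_j\theta_jZ_j}\Big), \] the minimum over all ensemble decompositions $\rho=\sum_lp_l|\psi_l\rangle\langle\psi_l|$. Then for every state $\rho$, \[ 0\le\mathcal{C}(\rho)\le\frac{4(n-1)}{n^2}, \] and the upper bound is attained by $\rho=|\psi\rangle\langle\psi|$ with $|\psi\rangle=\frac1{\sqrt n}\sum_{j=1}^ne^{i\phi_j}|j\rangle$ for arbitrary real phases $\phi_j$.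
   Context: The arithmetic-mean QFI of a family $\varrho_\theta$, $\theta\in\mathbb{R}^n$, is $\mathcal{F}_1(\varrho_\theta):=\frac1n\operatorname{tr}F(\varrho_\theta)$, with $F$ the SLD-based QFI matrix $[F]_{jk}=\operatorname{Re}\operatorname{tr}(L_jL_k\varrho_\theta)$, $L_j$ Hermitian with $\partial_j\varrho_\theta=(L_j\varrho_\theta+\varrho_\theta L_j)/2$. *)

theory Defs
  imports "HOL-Analysis.Analysis"
begin

text \<open>Operators on the n-dimensional Hilbert space C^n, n = CARD('n), written in the
  fixed reference (standard) basis. Matrices are complex^'n^'n.\<close>

definition cadj :: "complex^'n^'n \<Rightarrow> complex^'n^'n" where
  "cadj A = (\<chi> i j. cnj (A $ j $ i))"

definition hermitian :: "complex^'n^'n \<Rightarrow> bool" where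
  "hermitian A \<longleftrightarrow> cadj A = A"

definition diagonal_op :: "complex^'n^'n \<Rightarrow> bool" where
  "diagonal_op A \<longleftrightarrow> (\<forall>i j. i \<noteq> j \<longrightarrow> A $ i $ j = 0)"

definition psd :: "complex^'n^'n \<Rightarrow> bool" where
  "psd A \<longleftrightarrow> (\<forall>v::complex^'n. let q = (\<Sum>i\<in>UNIV. \<Sum>j\<in>UNIV. cnj (v $ i) * A $ i $ j * v $ j)
                                  in Im q = 0 \<and> Re q \<ge> 0)"

definition density :: "complex^'n^'n \<Rightarrow> bool" where
  "density \<rho> \<longleftrightarrow> hermitian \<rho> \<and> psd \<rho> \<and> trace \<rho> = 1"

definition proj :: "complex^'n \<Rightarrow> complex^'n^'n" where
  "proj \<psi> = (\<chi> i j. \<psi> $ i * cnj (\<psi> $ j))"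

primrec mpow :: "complex^'n^'n \<Rightarrow> nat \<Rightarrow> complex^'n^'n" where
  "mpow A 0 = mat 1"
| "mpow A (Suc k) = A ** mpow A k"

definition mexp :: "complex^'n^'n \<Rightarrow> complex^'n^'n" where
  "mexp A = (\<Sum>k. (1 / fact k) *\<^sub>R mpow A k)"

definition dpart :: "(real^'m \<Rightarrow> complex^'n^'n) \<Rightarrow> real^'m \<Rightarrow> 'm \<Rightarrow> complex^'n^'n" where
  "dpart f \<theta> j = vector_derivative (\<lambda>t. f (\<theta> + t *\<^sub>R axis j 1)) (at 0)"

text \<open>SLD-based QFI matrix: [F]_jk = Re tr(L_j L_k rho_theta), with L_j Hermitian and
  d_j rho = (L_j rho + rho L_j)/2 (the value does not depend on the choice of SLDs).\<close>
definition qfi_matrix :: "(real^'m \<Rightarrow> complex^'n^'n) \<Rightarrow> real^'m \<Rightarrow> 'm \<Rightarrow> 'm \<Rightarrow> real" where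
  "qfi_matrix f \<theta> j k =
     (let L = (SOME L. \<forall>j. hermitian (L j) \<and>
                 dpart f \<theta> j = (1/2 :: real) *\<^sub>R (L j ** f \<theta> + f \<theta> ** L j))
      in Re (trace (L j ** L k ** f \<theta>)))"

definition qfi_mean :: "(real^'m \<Rightarrow> complex^'n^'n) \<Rightarrow> real^'m \<Rightarrow> real" where
  "qfi_mean f \<theta> = (1 / real CARD('m)) * (\<Sum>j\<in>UNIV. qfi_matrix f \<theta> j j)"

definition Ugen :: "('n \<Rightarrow> complex^'n^'n) \<Rightarrow> real^'n \<Rightarrow> complex^'n^'n" where
  "Ugen Z \<theta> = mexp (\<chi> a b. \<i> * (\<Sum>j\<in>UNIV. complex_of_real (\<theta> $ j) * Z j $ a $ b))"

definition ensemble :: "complex^'n^'n \<Rightarrow> nat \<Rightarrow> (nat \<Rightarrow> real) \<Rightarrow> (nat \<Rightarrow> complex^'n) \<Rightarrow> bool" where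
  "ensemble \<rho> m p \<psi> \<longleftrightarrow> (\<forall>l<m. p l \<ge> 0 \<and> norm (\<psi> l) = 1) \<and> (\<Sum>l<m. p l) = 1 \<and>
      \<rho> = (\<Sum>l<m. p l *\<^sub>R proj (\<psi> l))"

text \<open>C(rho), evaluated at parameter point theta (the pure-state QFI of the unitary family does
  not depend on theta). The minimum over decompositions is written as an infimum.\<close>
definition Cmeas :: "('n \<Rightarrow> complex^'n^'n) \<Rightarrow> complex^'n^'n \<Rightarrow> real^'n \<Rightarrow> real" where
  "Cmeas Z \<rho> \<theta> = Inf {(\<Sum>l<m. p l * qfi_mean (\<lambda>\<theta>'. Ugen Z \<theta>' ** proj (\<psi> l) ** cadj (Ugen Z \<theta>')) \<theta>)
                        | m p \<psi>. ensemble \<rho> m p \<psi>}"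

end

theory Submission
  imports Defs
begin

(*
  The generators are diagonal, so U(theta) = exp(i sum_j theta_j Z_j) multiplies the a-th
  amplitude by the phase exp(i (theta Q)_a), where Q_ja is the a-th eigenvalue of Z_j; the
  condition tr(Z_j Z_k) = delta_jk says exactly that Q is an orthogonal matrix.  For a pure state
  psi the family is |psi_theta><psi_theta| with derivative [i Z_j, rho_theta], every SLD satisfies
  L_j psi_theta = 2 i (Z_j - <Z_j>) psi_theta, and so F_jj = 4 Var_q(Z_j) with q_a = |psi_a|^2.
  Orthogonality of Q sums these variances to 1 - sum_a q_a^2, hence
  F_1(psi) = 4 (1 - sum_a q_a^2) / n, which lies in [0, 4(n-1)/n^2] since
  1/n <= sum_a q_a^2 <= 1.  Ensemble averages inherit these bounds (ensembles exist by a
  Cholesky-type elimination).  An ensemble of the uniform superposition consists of phase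
  multiples of it, which all have uniform q, so the upper bound is attained.
*)

section \<open>Diagonal generators\<close>

definition diag_mat :: "('n::finite \<Rightarrow> 'a::zero) \<Rightarrow> 'a^'n^'n" where
  "diag_mat d = (\<chi> a b. if a = b then d a else 0)"

lemma diagonal_op_iff_diag_mat: "diagonal_op A \<longleftrightarrow> A = diag_mat (\<lambda>a. A $ a $ a)"
  by (auto simp: diagonal_op_def diag_mat_def vec_eq_iff)

lemma diag_mat_mult_left:
  fixes d :: "'n::finite \<Rightarrow> 'a::semiring_1"
  shows "diag_mat d ** M = (\<chi> a b. d a * M $ a $ b)"
  by (simp add: diag_mat_def matrix_matrix_mult_def vec_eq_iff if_distrib if_distribR cong: if_cong)

lemma diag_mat_mult_right:
  fixes d :: "'n::finite \<Rightarrow> 'a::semiring_1"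
  shows "M ** diag_mat d = (\<chi> a b. M $ a $ b * d b)"
  by (simp add: diag_mat_def matrix_matrix_mult_def vec_eq_iff if_distrib if_distribR cong: if_cong)

lemma diag_mat_mult: "diag_mat d ** diag_mat e = diag_mat (\<lambda>a. d a * e a)"
  by (simp add: diag_mat_mult_left) (simp add: diag_mat_def vec_eq_iff)

lemma diag_mat_mult_vec: "diag_mat d *v x = (\<chi> a. d a * x $ a)"
proof -
  have "(\<Sum>b\<in>UNIV. diag_mat d $ a $ b * x $ b) = (\<Sum>b\<in>UNIV. if b = a then d a * x $ a else 0)" for a
    by (rule sum.cong) (auto simp: diag_mat_def)
  then show ?thesis
    by (simp add: matrix_vector_mult_def vec_eq_iff)
qed

lemma trace_diag_mat: "trace (diag_mat d) = (\<Sum>a\<in>UNIV. d a)"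
  by (simp add: trace_def diag_mat_def)

lemma cadj_diag_mat: "cadj (diag_mat d) = diag_mat (\<lambda>a. cnj (d a))"
  by (simp add: cadj_def diag_mat_def vec_eq_iff)

lemma diag_mat_conj_proj: "diag_mat e ** proj \<psi> ** cadj (diag_mat e) = proj (\<chi> a. e a * \<psi> $ a)"
  by (simp add: diag_mat_mult_left diag_mat_mult_right cadj_diag_mat proj_def vec_eq_iff)

lemma mpow_diag_mat: "mpow (diag_mat d) k = diag_mat (\<lambda>a. d a ^ k)"
proof (induction k)
  case 0
  show ?case by (simp add: mat_def diag_mat_def)
next
  case (Suc k)
  then show ?case by (simp add: diag_mat_mult)
qed

lemma mexp_diag_mat: "mexp (diag_mat d) = diag_mat (\<lambda>a. exp (d a))"
proof -
  have "(\<lambda>k. (1 / fact k) *\<^sub>R mpow (diag_mat d) k) sums diag_mat (\<lambda>a. exp (d a))"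
    unfolding sums_def
  proof (intro vec_tendstoI)
    fix a b
    show "((\<lambda>n. (\<Sum>k<n. (1 / fact k) *\<^sub>R mpow (diag_mat d) k) $ a $ b)
            \<longlongrightarrow> diag_mat (\<lambda>a. exp (d a)) $ a $ b) sequentially"
      using exp_converges[of "d a", unfolded sums_def] unfolding mpow_diag_mat
      by (cases "a = b") (simp_all add: diag_mat_def divide_inverse_commute)
  qed
  then show ?thesis
    unfolding mexp_def by (rule sums_unique[symmetric])
qed

lemma hermitian_cnj_entry: "hermitian A \<Longrightarrow> cnj (A $ a $ b) = A $ b $ a"
  unfolding hermitian_def cadj_def by (metis vec_lambda_beta)

definition eigval_matrix :: "('n::finite \<Rightarrow> complex^'n^'n) \<Rightarrow> real^'n^'n" where
  "eigval_matrix Z = (\<chi> j a. Re (Z j $ a $ a))"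

lemma hermitian_diagonal_op_eq_diag_mat:
  assumes "hermitian (Z j)" and "diagonal_op (Z j)"
  shows "Z j = diag_mat (\<lambda>a. complex_of_real (eigval_matrix Z $ j $ a))"
proof -
  have "Z j $ a $ a = complex_of_real (Re (Z j $ a $ a))" for a
    using hermitian_cnj_entry[OF assms(1), of a a] by (metis Reals_cnj_iff of_real_Re)
  then show ?thesis
    using assms(2) by (subst diagonal_op_iff_diag_mat[THEN iffD1]) (simp_all add: eigval_matrix_def)
qed

lemma Ugen_eq_diag_mat:
  assumes herm: "\<And>j. hermitian (Z j)" and diag: "\<And>j. diagonal_op (Z j)"
  shows "Ugen Z \<theta> = diag_mat (\<lambda>a. cis ((\<theta> v* eigval_matrix Z) $ a))"
proof -
  have "(\<chi> a b. \<i> * (\<Sum>j\<in>UNIV. complex_of_real (\<theta> $ j) * Z j $ a $ b))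
        = diag_mat (\<lambda>a. \<i> * complex_of_real ((\<theta> v* eigval_matrix Z) $ a))"
    by (simp only: hermitian_diagonal_op_eq_diag_mat[where Z = Z, OF herm diag])
      (simp add: diag_mat_def vector_matrix_mult_def vec_eq_iff mult.commute)
  then show ?thesis
    by (simp add: Ugen_def mexp_diag_mat cis_conv_exp)
qed

lemma orthogonal_matrix_eigval_matrix:
  assumes herm: "\<And>j. hermitian (Z j)" and diag: "\<And>j. diagonal_op (Z j)"
    and orth: "\<And>j k. trace (Z j ** Z k) = (if j = k then 1 else 0)"
  shows "orthogonal_matrix (eigval_matrix Z)"
proof -
  let ?O = "eigval_matrix Z"
  have "trace (Z j ** Z k) = complex_of_real ((?O ** transpose ?O) $ j $ k)" for j k
    by (simp only: hermitian_diagonal_op_eq_diag_mat[where Z = Z, OF herm diag] diag_mat_mult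
        trace_diag_mat) (simp add: matrix_matrix_mult_def transpose_def)
  then have "?O ** transpose ?O = mat 1"
    using orth by (simp add: vec_eq_iff mat_def) (metis of_real_eq_0_iff of_real_eq_1_iff)
  then show ?thesis
    using orthogonal_matrix[of "transpose ?O"] by simp
qed

definition phase_rotation :: "real^'n^'n \<Rightarrow> real^'n \<Rightarrow> complex^'n \<Rightarrow> complex^'n::finite" where
  "phase_rotation Q \<theta> \<psi> = (\<chi> a. cis ((\<theta> v* Q) $ a) * \<psi> $ a)"

lemma Ugen_conj_proj:
  assumes "\<And>j. hermitian (Z j)" and "\<And>j. diagonal_op (Z j)"
  shows "Ugen Z \<theta> ** proj \<psi> ** cadj (Ugen Z \<theta>) = proj (phase_rotation (eigval_matrix Z) \<theta> \<psi>)"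
  by (simp add: Ugen_eq_diag_mat[OF assms] diag_mat_conj_proj phase_rotation_def)

lemma cmod_phase_rotation: "cmod (phase_rotation Q \<theta> \<psi> $ a) = cmod (\<psi> $ a)"
  by (simp add: phase_rotation_def norm_mult)

lemma norm_phase_rotation: "norm (phase_rotation Q \<theta> \<psi>) = norm \<psi>"
  by (simp add: norm_vec_def cmod_phase_rotation)

lemma vec_has_vector_derivativeI:
  fixes f :: "real \<Rightarrow> 'a::real_normed_vector^'n"
  assumes "\<And>i. ((\<lambda>x. f x $ i) has_vector_derivative f' $ i) F"
  shows "(f has_vector_derivative f') F"
  using assms unfolding has_vector_derivative_def has_derivative_def
  by (auto intro!: vec_tendstoI bounded_linear_scaleR_left)

lemma has_vector_derivative_cis_affine:
  "((\<lambda>t::real. cis (\<alpha> + t * \<beta>) * c)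
     has_vector_derivative (\<i> * complex_of_real \<beta> * cis \<alpha> * c)) (at 0)"
proof -
  have "((\<lambda>z. exp (\<i> * (complex_of_real \<alpha> + z * complex_of_real \<beta>)) * c) has_field_derivative
          (exp (\<i> * (complex_of_real \<alpha> + of_real 0 * complex_of_real \<beta>))
            * (\<i> * complex_of_real \<beta>) * c))
          (at (of_real 0))"
    by (auto intro!: derivative_eq_intros)
  from has_vector_derivative_real_field[OF this, of UNIV]
  show ?thesis
    by (simp add: cis_conv_exp algebra_simps)
qed

lemma vector_matrix_mult_add_axis:
  fixes Q :: "real^'n::finite^'n"
  shows "((\<theta> + t *\<^sub>R axis j 1) v* Q) $ a = (\<theta> v* Q) $ a + t * Q $ j $ a"
proof -
  have "(\<Sum>i\<in>UNIV. (t *\<^sub>R axis j 1 :: real^'n) $ i * Q $ i $ a)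
      = (\<Sum>i\<in>UNIV. if i = j then t * Q $ j $ a else 0)"
    by (rule sum.cong) (auto simp: axis_def)
  then show ?thesis
    by (simp add: vector_matrix_mult_def distrib_right sum.distrib)
qed

lemma dpart_proj_phase_rotation:
  fixes Q :: "real^'n::finite^'n" and j :: 'n
  defines "K \<equiv> diag_mat (\<lambda>a. \<i> * complex_of_real (Q $ j $ a))"
  shows "dpart (\<lambda>\<theta>. proj (phase_rotation Q \<theta> \<psi>)) \<theta> j
    = K ** proj (phase_rotation Q \<theta> \<psi>) - proj (phase_rotation Q \<theta> \<psi>) ** K"
  unfolding dpart_def
proof (rule vector_derivative_at, intro vec_has_vector_derivativeI)
  fix a b
  let ?\<alpha> = "(\<theta> v* Q) $ a - (\<theta> v* Q) $ b" and ?\<beta> = "Q $ j $ a - Q $ j $ b"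
  have "proj (phase_rotation Q (\<theta> + t *\<^sub>R axis j 1) \<psi>) $ a $ b
      = cis (?\<alpha> + t * ?\<beta>) * (\<psi> $ a * cnj (\<psi> $ b))" for t
  proof -
    have "cis ((\<theta> v* Q) $ a + t * Q $ j $ a) * cnj (cis ((\<theta> v* Q) $ b + t * Q $ j $ b))
        = cis (?\<alpha> + t * ?\<beta>)"
      by (simp add: cis_cnj cis_mult algebra_simps)
    then show ?thesis
      by (simp add: proj_def phase_rotation_def vector_matrix_mult_add_axis mult_ac)
  qed
  moreover have "(K ** proj (phase_rotation Q \<theta> \<psi>) - proj (phase_rotation Q \<theta> \<psi>) ** K) $ a $ b
      = \<i> * complex_of_real ?\<beta> * cis ?\<alpha> * (\<psi> $ a * cnj (\<psi> $ b))"
  proof -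
    have "(K ** proj (phase_rotation Q \<theta> \<psi>) - proj (phase_rotation Q \<theta> \<psi>) ** K) $ a $ b
        = \<i> * complex_of_real ?\<beta> * (cis ((\<theta> v* Q) $ a) * cnj (cis ((\<theta> v* Q) $ b)))
          * (\<psi> $ a * cnj (\<psi> $ b))"
      by (simp add: K_def diag_mat_mult_left diag_mat_mult_right proj_def phase_rotation_def
          algebra_simps)
    also have "cis ((\<theta> v* Q) $ a) * cnj (cis ((\<theta> v* Q) $ b)) = cis ?\<alpha>"
      by (simp add: cis_cnj cis_mult)
    finally show ?thesis .
  qed
  ultimately show "((\<lambda>t. proj (phase_rotation Q (\<theta> + t *\<^sub>R axis j 1) \<psi>) $ a $ b)
      has_vector_derivative
      (K ** proj (phase_rotation Q \<theta> \<psi>) - proj (phase_rotation Q \<theta> \<psi>) ** K) $ a $ b) (at 0)"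
    using has_vector_derivative_cis_affine[of ?\<alpha> ?\<beta> "\<psi> $ a * cnj (\<psi> $ b)"] by simp
qed

section \<open>Symmetric logarithmic derivatives of pure states\<close>

definition cinner :: "complex^'n::finite \<Rightarrow> complex^'n \<Rightarrow> complex" where
  "cinner x y = (\<Sum>i\<in>UNIV. cnj (x $ i) * y $ i)"

lemma power2_norm_vec_complex: "(norm (x::complex^'n::finite))\<^sup>2 = (\<Sum>i\<in>UNIV. (cmod (x $ i))\<^sup>2)"
  by (simp add: norm_vec_def L2_set_def sum_nonneg)

lemma sum_cmod_power2_unit: "norm \<psi> = 1 \<Longrightarrow> (\<Sum>a\<in>UNIV. (cmod (\<psi> $ a))\<^sup>2) = 1"
  by (metis power2_norm_vec_complex power_one)

lemma cinner_self: "cinner x x = complex_of_real ((norm x)\<^sup>2)"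
  unfolding cinner_def power2_norm_vec_complex of_real_sum complex_norm_square
  by (simp add: mult.commute)

lemma cinner_self_unit: "norm x = 1 \<Longrightarrow> cinner x x = 1"
  by (simp add: cinner_self)

lemma cnj_cinner: "cnj (cinner x y) = cinner y x"
  by (simp add: cinner_def mult.commute)

lemma cmod_cinner_commute: "cmod (cinner x y) = cmod (cinner y x)"
  by (metis cnj_cinner complex_mod_cnj)

lemma cinner_add_right: "cinner x (y + z) = cinner x y + cinner x z"
  by (simp add: cinner_def distrib_left sum.distrib)

lemma cinner_diff_right: "cinner x (y - z) = cinner x y - cinner x z"
  by (simp add: cinner_def right_diff_distrib sum_subtractf)

lemma cinner_diff_left: "cinner (x - y) z = cinner x z - cinner y z"
  by (simp add: cinner_def left_diff_distrib sum_subtractf)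

lemma cinner_smult_right: "cinner x (c *s y) = c * cinner x y"
  by (simp add: cinner_def sum_distrib_left algebra_simps)

lemma cinner_smult_left: "cinner (c *s x) y = cnj c * cinner x y"
  by (simp add: cinner_def sum_distrib_left algebra_simps)

lemma cinner_scaleR_right: "cinner x (r *\<^sub>R y) = complex_of_real r * cinner x y"
  by (simp add: cinner_def sum_distrib_left scaleR_conv_of_real[where 'a = complex] mult_ac)

lemma cinner_scaleR_left: "cinner (r *\<^sub>R x) y = complex_of_real r * cinner x y"
  by (simp add: cinner_def sum_distrib_left scaleR_conv_of_real[where 'a = complex] mult_ac)

lemma cinner_sum_right: "cinner x (\<Sum>l\<in>A. y l) = (\<Sum>l\<in>A. cinner x (y l))"
  by (simp add: cinner_def sum_distrib_left) (rule sum.swap)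

lemma cinner_axis_left: "cinner (axis k 1) x = x $ k"
proof -
  have "(\<Sum>i\<in>UNIV. cnj (axis k 1 $ i) * x $ i) = (\<Sum>i\<in>UNIV. if i = k then x $ i else 0)"
    by (rule sum.cong) (simp_all add: axis_def)
  then show ?thesis
    by (simp add: cinner_def)
qed

lemma cinner_hermitian_mult_vec: "hermitian A \<Longrightarrow> cinner (A *v x) y = cinner x (A *v y)"
  unfolding cinner_def matrix_vector_mult_def
  by (simp add: hermitian_cnj_entry sum_distrib_left sum_distrib_right mult_ac)
    (rule sum.swap)

lemma proj_mult_vec: "proj \<phi> *v x = cinner \<phi> x *s \<phi>"
  by (simp add: proj_def cinner_def matrix_vector_mult_def vec_eq_iff sum_distrib_left mult_ac)

lemma cinner_mult_vec_proj: "cinner v (proj w *v v) = complex_of_real ((cmod (cinner w v))\<^sup>2)"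
proof -
  have "cinner v w = cnj (cinner w v)"
    by (simp add: cnj_cinner)
  then show ?thesis
    by (simp add: proj_mult_vec cinner_smult_right complex_norm_square del: of_real_power)
qed

lemma trace_mult_proj: "trace (A ** proj \<phi>) = cinner \<phi> (A *v \<phi>)"
  by (simp add: trace_def proj_def cinner_def matrix_matrix_mult_def matrix_vector_mult_def
      sum_distrib_left mult_ac)

lemma proj_mult_proj:
  assumes "norm \<phi> = 1"
  shows "proj \<phi> ** proj \<phi> = proj \<phi>"
proof -
  have "(proj \<phi> ** proj \<phi>) $ a $ b = \<phi> $ a * cnj (\<phi> $ b) * cinner \<phi> \<phi>" for a b
    by (simp add: proj_def cinner_def matrix_matrix_mult_def sum_distrib_left mult_ac)
  then show ?thesis
    by (simp add: vec_eq_iff proj_def cinner_self_unit[OF assms])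
qed

lemma scaleR_matrix_mult_vec: "((r::real) *\<^sub>R A) *v x = r *\<^sub>R (A *v (x::complex^'n::finite))"
  by (simp add: matrix_vector_mult_def vec_eq_iff scaleR_sum_right)

lemma sum_matrix_mult_vec: "(\<Sum>l\<in>I. A l) *v x = (\<Sum>l\<in>I. A l *v x)"
  by (simp add: matrix_vector_mult_def vec_eq_iff sum_distrib_right sum.swap[of _ UNIV I])

lemma matrix_diff_ldistrib: "(A::'a::ring_1^'n^'m) ** (B - C) = A ** B - A ** C"
  by (simp add: matrix_matrix_mult_def vec_eq_iff right_diff_distrib sum_subtractf)

lemma matrix_diff_rdistrib: "((A::'a::ring_1^'n^'m) - B) ** C = A ** C - B ** C"
  by (simp add: matrix_matrix_mult_def vec_eq_iff left_diff_distrib sum_subtractf)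

definition sld :: "complex^'n::finite^'n \<Rightarrow> complex^'n^'n \<Rightarrow> complex^'n^'n \<Rightarrow> bool" where
  "sld \<rho> D L \<longleftrightarrow> hermitian L \<and> D = (1/2::real) *\<^sub>R (L ** \<rho> + \<rho> ** L)"

(* SLDs of a rank-deficient state are not unique, so the value has to be established for every
   SLD, whichever one the SOME in qfi_matrix picks. *)
lemma qfi_matrix_diag_eq:
  assumes "\<exists>L. \<forall>j. sld (f \<theta>) (dpart f \<theta> j) (L j)"
    and "\<And>L. sld (f \<theta>) (dpart f \<theta> j) L \<Longrightarrow> Re (trace (L ** L ** f \<theta>)) = v"
  shows "qfi_matrix f \<theta> j j = v"
proof -
  define L where "L = (SOME L. \<forall>j. sld (f \<theta>) (dpart f \<theta> j) (L j))"
  have "sld (f \<theta>) (dpart f \<theta> j) (L j)"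
    using someI_ex[OF assms(1)] unfolding L_def by blast
  moreover have "qfi_matrix f \<theta> j j = Re (trace (L j ** L j ** f \<theta>))"
    by (simp add: qfi_matrix_def L_def sld_def Let_def)
  ultimately show ?thesis
    using assms(2) by blast
qed

lemma commutator_proj_sld_equation:
  fixes K :: "complex^'n::finite^'n"
  assumes "norm \<phi> = 1"
  defines "D \<equiv> K ** proj \<phi> - proj \<phi> ** K"
  shows "D = (1/2::real) *\<^sub>R (((2::real) *\<^sub>R D) ** proj \<phi> + proj \<phi> ** ((2::real) *\<^sub>R D))"
proof -
  let ?P = "proj \<phi>"
  have idem: "A ** ?P ** ?P = A ** ?P" for A
    by (metis matrix_mul_assoc proj_mult_proj[OF assms(1)])
  have "D ** ?P + ?P ** D = D"
    by (simp add: D_def matrix_diff_ldistrib matrix_diff_rdistrib matrix_mul_assoc idem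
        proj_mult_proj[OF assms(1)])
  then show ?thesis
    by (simp add: matrix_scalar_ac flip: scalar_matrix_assoc scaleR_add_right)
qed

lemma sld_commutator_diag_proj:
  fixes z :: "'n::finite \<Rightarrow> real"
  assumes "norm \<phi> = 1"
  defines "K \<equiv> diag_mat (\<lambda>a. \<i> * complex_of_real (z a))"
  shows "sld (proj \<phi>) (K ** proj \<phi> - proj \<phi> ** K) ((2::real) *\<^sub>R (K ** proj \<phi> - proj \<phi> ** K))"
proof -
  have "hermitian ((2::real) *\<^sub>R (K ** proj \<phi> - proj \<phi> ** K))"
    by (simp add: K_def hermitian_def cadj_def diag_mat_mult_left diag_mat_mult_right proj_def
        vec_eq_iff algebra_simps)
  then show ?thesis
    using commutator_proj_sld_equation[OF assms(1)] by (simp add: sld_def)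
qed

(* Applying both sides of the SLD equation to phi and pairing with phi shows
   cinner phi (L *v phi) = 0, hence L *v phi is twice the vector on the right-hand side. *)
lemma sld_commutator_proj_value:
  assumes unit: "norm \<phi> = 1" and L: "sld (proj \<phi>) (K ** proj \<phi> - proj \<phi> ** K) L"
  shows "Re (trace (L ** L ** proj \<phi>)) = 4 * (norm ((K ** proj \<phi> - proj \<phi> ** K) *v \<phi>))\<^sup>2"
proof -
  let ?P = "proj \<phi>"
  define w where "w = (K ** ?P - ?P ** K) *v \<phi>"
  have herm: "hermitian L" and eq: "K ** ?P - ?P ** K = (1/2::real) *\<^sub>R (L ** ?P + ?P ** L)"
    using L by (simp_all add: sld_def)
  have w_K: "w = K *v \<phi> - cinner \<phi> (K *v \<phi>) *s \<phi>"
    by (simp add: w_def matrix_vector_mult_diff_rdistrib proj_mult_vec cinner_self_unit[OF unit]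
        flip: matrix_vector_mul_assoc)
  have w_L: "w = (1/2::real) *\<^sub>R (L *v \<phi> + cinner \<phi> (L *v \<phi>) *s \<phi>)"
    by (simp add: w_def eq scaleR_matrix_mult_vec matrix_vector_mult_add_rdistrib proj_mult_vec
        cinner_self_unit[OF unit] flip: matrix_vector_mul_assoc)
  have "cinner \<phi> w = 0"
    by (simp add: w_K cinner_diff_right cinner_smult_right cinner_self_unit[OF unit])
  moreover have "cinner \<phi> w = cinner \<phi> (L *v \<phi>)"
    by (simp add: w_L cinner_scaleR_right cinner_add_right cinner_smult_right
        cinner_self_unit[OF unit])
  ultimately have "L *v \<phi> = (2::real) *\<^sub>R w"
    using w_L by simp
  have "trace (L ** L ** ?P) = cinner (L *v \<phi>) (L *v \<phi>)"
    by (simp add: trace_mult_proj cinner_hermitian_mult_vec[OF herm] flip: matrix_vector_mul_assoc)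
  also have "\<dots> = complex_of_real (4 * (norm w)\<^sup>2)"
    by (simp add: \<open>L *v \<phi> = (2::real) *\<^sub>R w\<close> cinner_self power_mult_distrib)
  finally show ?thesis
    by (simp add: w_def)
qed

section \<open>The mean QFI of a pure state\<close>

definition weighted_variance :: "('n::finite \<Rightarrow> real) \<Rightarrow> ('n \<Rightarrow> real) \<Rightarrow> real" where
  "weighted_variance q z = (\<Sum>a\<in>UNIV. q a * (z a - (\<Sum>b\<in>UNIV. q b * z b))\<^sup>2)"

lemma weighted_variance_eq:
  assumes "(\<Sum>a\<in>UNIV. q a) = 1"
  shows "weighted_variance q z = (\<Sum>a\<in>UNIV. q a * (z a)\<^sup>2) - (\<Sum>a\<in>UNIV. q a * z a)\<^sup>2"
proof -
  define m where "m = (\<Sum>b\<in>UNIV. q b * z b)"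
  have "weighted_variance q z = (\<Sum>a\<in>UNIV. q a * (z a)\<^sup>2 - 2 * m * (q a * z a) + m\<^sup>2 * q a)"
    unfolding weighted_variance_def m_def[symmetric]
    by (rule sum.cong) (simp_all add: power2_eq_square algebra_simps)
  also have "\<dots> = (\<Sum>a\<in>UNIV. q a * (z a)\<^sup>2) - m\<^sup>2"
    by (simp add: sum.distrib sum_subtractf assms power2_eq_square m_def flip: sum_distrib_left)
  finally show ?thesis
    by (simp add: m_def)
qed

lemma sum_weighted_variance_orthogonal_matrix:
  fixes Q :: "real^'n::finite^'n"
  assumes Q: "orthogonal_matrix Q" and q: "(\<Sum>a\<in>UNIV. q a) = 1"
  shows "(\<Sum>j\<in>UNIV. weighted_variance q (\<lambda>a. Q $ j $ a)) = 1 - (\<Sum>a\<in>UNIV. (q a)\<^sup>2)"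
proof -
  have "transpose Q ** Q = mat 1"
    using Q by (simp only: orthogonal_matrix)
  then have col: "(\<Sum>j\<in>UNIV. Q $ j $ a * Q $ j $ b) = (if a = b then 1 else 0)" for a b
    unfolding vec_eq_iff by (simp add: matrix_matrix_mult_def transpose_def mat_def)
  have "(\<Sum>j\<in>UNIV. \<Sum>a\<in>UNIV. q a * (Q $ j $ a)\<^sup>2) = (\<Sum>a\<in>UNIV. q a * (\<Sum>j\<in>UNIV. Q $ j $ a * Q $ j $ a))"
    by (subst sum.swap) (simp add: sum_distrib_left power2_eq_square)
  also have "\<dots> = 1"
    by (simp add: col q)
  finally have first: "(\<Sum>j\<in>UNIV. \<Sum>a\<in>UNIV. q a * (Q $ j $ a)\<^sup>2) = 1" .
  have "(\<Sum>j\<in>UNIV. (\<Sum>a\<in>UNIV. q a * Q $ j $ a)\<^sup>2)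
        = (\<Sum>j\<in>UNIV. \<Sum>a\<in>UNIV. \<Sum>b\<in>UNIV. q a * q b * (Q $ j $ a * Q $ j $ b))"
    by (simp add: power2_eq_square sum_product mult_ac)
  also have "\<dots> = (\<Sum>a\<in>UNIV. \<Sum>j\<in>UNIV. \<Sum>b\<in>UNIV. q a * q b * (Q $ j $ a * Q $ j $ b))"
    by (rule sum.swap)
  also have "\<dots> = (\<Sum>a\<in>UNIV. \<Sum>b\<in>UNIV. \<Sum>j\<in>UNIV. q a * q b * (Q $ j $ a * Q $ j $ b))"
    by (intro sum.cong refl sum.swap)
  also have "\<dots> = (\<Sum>a\<in>UNIV. \<Sum>b\<in>UNIV. q a * q b * (\<Sum>j\<in>UNIV. Q $ j $ a * Q $ j $ b))"
    by (simp add: sum_distrib_left)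
  also have "\<dots> = (\<Sum>a\<in>UNIV. (q a)\<^sup>2)"
    by (simp add: col power2_eq_square if_distrib cong: if_cong)
  finally have second: "(\<Sum>j\<in>UNIV. (\<Sum>a\<in>UNIV. q a * Q $ j $ a)\<^sup>2) = (\<Sum>a\<in>UNIV. (q a)\<^sup>2)" .
  show ?thesis
    by (simp add: weighted_variance_eq[OF q] sum_subtractf first second)
qed

lemma norm_commutator_diag_proj:
  fixes z :: "'n::finite \<Rightarrow> real"
  assumes unit: "norm \<phi> = 1"
  defines "K \<equiv> diag_mat (\<lambda>a. \<i> * complex_of_real (z a))"
  shows "(norm ((K ** proj \<phi> - proj \<phi> ** K) *v \<phi>))\<^sup>2
    = weighted_variance (\<lambda>a. (cmod (\<phi> $ a))\<^sup>2) z"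
proof -
  define m where "m = (\<Sum>b\<in>UNIV. (cmod (\<phi> $ b))\<^sup>2 * z b)"
  have "cinner \<phi> (K *v \<phi>) = \<i> * complex_of_real m"
    unfolding K_def m_def cinner_def diag_mat_mult_vec of_real_sum of_real_mult complex_norm_square
    by (simp add: sum_distrib_left mult_ac)
  then have "(K ** proj \<phi> - proj \<phi> ** K) *v \<phi> = (\<chi> a. \<i> * complex_of_real (z a - m) * \<phi> $ a)"
    by (simp add: proj_mult_vec cinner_self_unit[OF unit] K_def diag_mat_mult_vec vec_eq_iff
        algebra_simps flip: matrix_vector_mul_assoc)
  then have "(norm ((K ** proj \<phi> - proj \<phi> ** K) *v \<phi>))\<^sup>2
      = (\<Sum>a\<in>UNIV. (cmod (\<phi> $ a))\<^sup>2 * (z a - m)\<^sup>2)"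
    by (simp add: power2_norm_vec_complex norm_mult power_mult_distrib mult.commute
        del: of_real_diff)
  then show ?thesis
    by (simp add: weighted_variance_def m_def mult.commute)
qed

definition pure_qfi :: "('n::finite \<Rightarrow> complex^'n^'n) \<Rightarrow> complex^'n \<Rightarrow> real^'n \<Rightarrow> real" where
  "pure_qfi Z \<psi> \<theta> = qfi_mean (\<lambda>\<theta>'. Ugen Z \<theta>' ** proj \<psi> ** cadj (Ugen Z \<theta>')) \<theta>"

lemma pure_qfi_eq:
  fixes Z :: "'n::finite \<Rightarrow> complex^'n^'n"
  assumes herm: "\<And>j. hermitian (Z j)" and diag: "\<And>j. diagonal_op (Z j)"
    and orth: "\<And>j k. trace (Z j ** Z k) = (if j = k then 1 else 0)"
    and unit: "norm \<psi> = 1"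
  shows "pure_qfi Z \<psi> \<theta> = 4 / real CARD('n) * (1 - (\<Sum>a\<in>UNIV. ((cmod (\<psi> $ a))\<^sup>2)\<^sup>2))"
proof -
  let ?Q = "eigval_matrix Z"
  let ?P = "\<lambda>\<theta>'. proj (phase_rotation ?Q \<theta>' \<psi>)"
  define q where "q = (\<lambda>a. (cmod (\<psi> $ a))\<^sup>2)"
  define K where "K j = diag_mat (\<lambda>a. \<i> * complex_of_real (?Q $ j $ a))" for j
  have unit': "norm (phase_rotation ?Q \<theta> \<psi>) = 1"
    by (simp add: norm_phase_rotation unit)
  have dpart: "dpart ?P \<theta> j = K j ** ?P \<theta> - ?P \<theta> ** K j" for j
    unfolding K_def by (rule dpart_proj_phase_rotation)
  have "qfi_matrix ?P \<theta> j j = 4 * weighted_variance q (\<lambda>a. ?Q $ j $ a)" for j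
  proof (rule qfi_matrix_diag_eq)
    have "sld (?P \<theta>) (dpart ?P \<theta> j) ((2::real) *\<^sub>R (K j ** ?P \<theta> - ?P \<theta> ** K j))" for j
      unfolding dpart K_def by (rule sld_commutator_diag_proj[OF unit'])
    then show "\<exists>L. \<forall>j. sld (?P \<theta>) (dpart ?P \<theta> j) (L j)"
      by (intro exI[of _ "\<lambda>j. (2::real) *\<^sub>R (K j ** ?P \<theta> - ?P \<theta> ** K j)"]) simp
    show "Re (trace (L ** L ** ?P \<theta>)) = 4 * weighted_variance q (\<lambda>a. ?Q $ j $ a)"
      if "sld (?P \<theta>) (dpart ?P \<theta> j) L" for L
      using sld_commutator_proj_value[OF unit'] norm_commutator_diag_proj[OF unit'] that
      by (simp add: dpart K_def q_def cmod_phase_rotation)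
  qed
  then have "pure_qfi Z \<psi> \<theta> = 4 / real CARD('n) * (\<Sum>j\<in>UNIV. weighted_variance q (\<lambda>a. ?Q $ j $ a))"
    by (simp add: pure_qfi_def Ugen_conj_proj[OF herm diag] qfi_mean_def sum_distrib_left)
  also have "\<dots> = 4 / real CARD('n) * (1 - (\<Sum>a\<in>UNIV. (q a)\<^sup>2))"
    using orthogonal_matrix_eigval_matrix[OF herm diag orth, THEN sum_weighted_variance_orthogonal_matrix]
      sum_cmod_power2_unit[OF unit] by (simp add: q_def)
  finally show ?thesis
    by (simp add: q_def)
qed

lemma sum_power2_prob_bounds:
  fixes q :: "'n::finite \<Rightarrow> real"
  assumes nonneg: "\<And>a. 0 \<le> q a" and sum1: "(\<Sum>a\<in>UNIV. q a) = 1"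
  shows "1 / real CARD('n) \<le> (\<Sum>a\<in>UNIV. (q a)\<^sup>2)" and "(\<Sum>a\<in>UNIV. (q a)\<^sup>2) \<le> 1"
proof -
  define n where "n = real CARD('n)"
  have "0 \<le> (\<Sum>a\<in>UNIV. (q a - 1 / n)\<^sup>2)"
    by (simp add: sum_nonneg)
  also have "\<dots> = (\<Sum>a\<in>UNIV. (q a)\<^sup>2) - 2 / n * (\<Sum>a\<in>UNIV. q a) + n * (1 / n)\<^sup>2"
    by (simp add: power2_diff sum.distrib sum_subtractf n_def mult_ac flip: sum_distrib_left
        sum_distrib_right sum_divide_distrib)
  also have "\<dots> = (\<Sum>a\<in>UNIV. (q a)\<^sup>2) - 1 / n"
    by (simp add: sum1 n_def power2_eq_square)
  finally show "1 / real CARD('n) \<le> (\<Sum>a\<in>UNIV. (q a)\<^sup>2)"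
    by (simp add: n_def)
  have "q a \<le> 1" for a
    using member_le_sum[of a UNIV q] nonneg sum1 by simp
  then have "(q a)\<^sup>2 \<le> q a" for a
    using nonneg[of a] by (simp add: power2_eq_square mult_left_le)
  then show "(\<Sum>a\<in>UNIV. (q a)\<^sup>2) \<le> 1"
    using sum_mono[of UNIV "\<lambda>a. (q a)\<^sup>2" q] sum1 by simp
qed

lemma pure_qfi_bounds:
  fixes Z :: "'n::finite \<Rightarrow> complex^'n^'n"
  assumes herm: "\<And>j. hermitian (Z j)" and diag: "\<And>j. diagonal_op (Z j)"
    and orth: "\<And>j k. trace (Z j ** Z k) = (if j = k then 1 else 0)"
    and unit: "norm \<psi> = 1"
  shows "0 \<le> pure_qfi Z \<psi> \<theta>" and "pure_qfi Z \<psi> \<theta> \<le> 4 * (real CARD('n) - 1) / (real CARD('n))\<^sup>2"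
proof -
  define n where "n = real CARD('n)"
  define s where "s = (\<Sum>a\<in>UNIV. ((cmod (\<psi> $ a))\<^sup>2)\<^sup>2)"
  have n: "0 < n"
    by (simp add: n_def)
  have s: "1 / n \<le> s" "s \<le> 1"
    using sum_power2_prob_bounds[of "\<lambda>a. (cmod (\<psi> $ a))\<^sup>2"] sum_cmod_power2_unit[OF unit]
    by (simp_all add: n_def s_def)
  have F: "pure_qfi Z \<psi> \<theta> = 4 / n * (1 - s)"
    by (simp add: pure_qfi_eq[OF herm diag orth unit] n_def s_def)
  show "0 \<le> pure_qfi Z \<psi> \<theta>"
    using n s by (simp add: F)
  have "4 / n * (1 - s) \<le> 4 / n * (1 - 1 / n)"
    using n s by (intro mult_left_mono) auto
  also have "\<dots> = 4 * (n - 1) / n\<^sup>2"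
    using n by (simp add: field_simps power2_eq_square)
  finally show "pure_qfi Z \<psi> \<theta> \<le> 4 * (real CARD('n) - 1) / (real CARD('n))\<^sup>2"
    by (simp add: F n_def)
qed

section \<open>Ensemble decompositions\<close>

lemma psd_iff_cinner: "psd A \<longleftrightarrow> (\<forall>v. Im (cinner v (A *v v)) = 0 \<and> 0 \<le> Re (cinner v (A *v v)))"
  by (simp add: psd_def cinner_def matrix_vector_mult_def sum_distrib_left mult.assoc Let_def)

lemma mult_vec_axis_nth: "(A *v axis j 1) $ k = A $ k $ j"
proof -
  have "(\<Sum>i\<in>UNIV. A $ k $ i * axis j 1 $ i) = (\<Sum>i\<in>UNIV. if i = j then A $ k $ j else 0)"
    by (rule sum.cong) (simp_all add: axis_def)
  then show ?thesis
    by (simp add: matrix_vector_mult_def)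
qed

lemma cinner_column_hermitian: "hermitian A \<Longrightarrow> cinner (column k A) v = (A *v v) $ k"
  by (simp add: cinner_def column_def matrix_vector_mult_def hermitian_cnj_entry)

lemma cinner_hermitian_diff_axis:
  assumes herm: "hermitian A"
  shows "cinner (v - s *s axis k 1) (A *v (v - s *s axis k 1))
    = cinner v (A *v v) - s * cnj ((A *v v) $ k) - cnj s * (A *v v) $ k + cnj s * s * A $ k $ k"
proof -
  have "cinner v (A *v axis k 1) = cnj ((A *v v) $ k)"
    by (metis cinner_hermitian_mult_vec[OF herm] cinner_axis_left cnj_cinner)
  then show ?thesis
    by (simp add: vector_scalar_commute cinner_diff_left
        cinner_diff_right cinner_smult_left cinner_smult_right cinner_axis_left mult_vec_axis_nth
        algebra_simps)
qed

lemma psd_diag_eq_0_imp_row_eq_0: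
  assumes herm: "hermitian A" and psd: "psd A" and kk: "A $ k $ k = 0"
  shows "A $ k $ j = 0"
proof (rule ccontr)
  assume "A $ k $ j \<noteq> 0"
  define c where "c = A $ k $ j"
  define t where "t = (Re (A $ j $ j) + 1) / (2 * (cmod c)\<^sup>2)"
  define v where "v = axis j 1 - (complex_of_real t * c) *s axis k 1"
  have "cinner v (A *v v) = A $ j $ j - complex_of_real (2 * t * (cmod c)\<^sup>2)"
    unfolding v_def cinner_hermitian_diff_axis[OF herm]
    by (simp add: cinner_axis_left mult_vec_axis_nth kk c_def complex_norm_square algebra_simps
        del: of_real_power)
  moreover have "2 * t * (cmod c)\<^sup>2 = Re (A $ j $ j) + 1"
    using \<open>A $ k $ j \<noteq> 0\<close> by (simp add: t_def c_def)
  ultimately have "Re (cinner v (A *v v)) = -1"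
    by simp
  with psd show False
    unfolding psd_iff_cinner by (metis neg_0_le_iff_le not_one_le_zero)
qed

(* One step of a Cholesky-type elimination: with c = (A *v v) $ k, the quadratic form of
   A - proj w at v equals that of A at v - (c / A $ k $ k) *s axis k 1. *)
lemma psd_sub_proj_column:
  assumes herm: "hermitian A" and psd: "psd A" and kk: "A $ k $ k \<noteq> 0"
  defines "w \<equiv> (1 / sqrt (Re (A $ k $ k))) *\<^sub>R column k A"
  shows "hermitian (A - proj w)" and "psd (A - proj w)" and "(A - proj w) $ k $ j = 0"
    and "(\<forall>j. A $ i $ j = 0) \<Longrightarrow> (A - proj w) $ i $ j = 0"
proof -
  define r where "r = Re (A $ k $ k)"
  have A_kk: "A $ k $ k = complex_of_real r"
    using hermitian_cnj_entry[OF herm, of k k] unfolding r_def by (metis Reals_cnj_iff of_real_Re)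
  have "0 \<le> r"
    using psd unfolding psd_iff_cinner r_def by (metis cinner_axis_left mult_vec_axis_nth)
  with kk A_kk have r: "0 < r"
    by fastforce
  have w: "w $ i = A $ i $ k / complex_of_real (sqrt r)" for i
    by (simp add: w_def r_def column_def scaleR_conv_of_real[where 'a = complex] divide_inverse
        mult.commute)
  show "hermitian (A - proj w)"
    using hermitian_cnj_entry[OF herm]
    by (simp add: hermitian_def cadj_def proj_def vec_eq_iff mult.commute)
  show "psd (A - proj w)"
    unfolding psd_iff_cinner
  proof
    fix v
    define c where "c = (A *v v) $ k"
    have "cinner w v = c / complex_of_real (sqrt r)"
      by (simp add: w_def cinner_scaleR_left cinner_column_hermitian[OF herm] c_def r_def
          divide_inverse mult.commute)
    then have "cinner v ((A - proj w) *v v) = cinner v (A *v v) - c * cnj c / complex_of_real r"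
      using r by (simp add: matrix_vector_mult_diff_rdistrib cinner_diff_right cinner_mult_vec_proj
          norm_divide power_divide complex_norm_square del: of_real_power)
    also have "\<dots> = cinner (v - (c / complex_of_real r) *s axis k 1)
        (A *v (v - (c / complex_of_real r) *s axis k 1))"
      using r by (simp add: cinner_hermitian_diff_axis[OF herm] A_kk field_simps c_def)
    finally show "Im (cinner v ((A - proj w) *v v)) = 0 \<and> 0 \<le> Re (cinner v ((A - proj w) *v v))"
      using psd unfolding psd_iff_cinner by simp
  qed
  show "(A - proj w) $ k $ j = 0"
    using r hermitian_cnj_entry[OF herm, of j k]
    by (simp add: proj_def w A_kk field_simps flip: of_real_mult)
  show "(A - proj w) $ i $ j = 0" if "\<forall>j. A $ i $ j = 0"
    using that by (simp add: proj_def w)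
qed

lemma psd_eq_sum_proj_on_rows:
  assumes "hermitian A" and "psd A" and "\<forall>i j. i \<notin> S \<longrightarrow> A $ i $ j = 0"
  shows "\<exists>(m::nat) W. (\<forall>l<m. W l \<noteq> 0) \<and> A = (\<Sum>l<m. proj (W l))"
  using finite[of S] assms
proof (induction S arbitrary: A rule: finite_induct)
  case empty
  then have "A = 0"
    by (simp add: vec_eq_iff)
  then show ?case
    by (intro exI[of _ 0]) simp
next
  case (insert k S)
  show ?case
  proof (cases "A $ k $ k = 0")
    case True
    then have "A $ k $ j = 0" for j
      using psd_diag_eq_0_imp_row_eq_0 insert.prems(1,2) by blast
    then have "\<forall>i j. i \<notin> S \<longrightarrow> A $ i $ j = 0"
      using insert.prems(3) by (metis insert_iff)
    then show ?thesis
      using insert.IH insert.prems by blast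
  next
    case False
    define w where "w = (1 / sqrt (Re (A $ k $ k))) *\<^sub>R column k A"
    note step = psd_sub_proj_column[OF insert.prems(1,2) False, folded w_def]
    have "(A - proj w) $ i $ j = 0" if "i \<notin> S" for i j
    proof (cases "i = k")
      case True
      then show ?thesis
        using step(3) by simp
    next
      case False
      then show ?thesis
        using step(4) insert.prems(3) that by simp
    qed
    then have "\<forall>i j. i \<notin> S \<longrightarrow> (A - proj w) $ i $ j = 0"
      by blast
    then obtain m :: nat and W where W: "\<forall>l<m. W l \<noteq> 0" "A - proj w = (\<Sum>l<m. proj (W l))"
      using insert.IH[OF step(1,2)] by blast
    have "w $ k \<noteq> 0"
      using step(3)[of k] False by (auto simp: proj_def)
    then have "\<forall>l<Suc m. (W(m := w)) l \<noteq> 0"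
      using W(1) by (auto simp: less_Suc_eq)
    moreover have "A = (\<Sum>l<Suc m. proj ((W(m := w)) l))"
      using W(2) by (simp add: algebra_simps)
    ultimately show ?thesis
      by blast
  qed
qed

lemma trace_proj: "trace (proj w) = complex_of_real ((norm w)\<^sup>2)"
  by (simp add: trace_def proj_def power2_norm_vec_complex complex_norm_square del: of_real_power)

lemma trace_sum: "trace (\<Sum>l\<in>I. A l) = (\<Sum>l\<in>I. trace (A l))"
  by (simp add: trace_def) (rule sum.swap)

lemma proj_scaleR: "proj (r *\<^sub>R w) = (r * r) *\<^sub>R proj w"
  by (simp add: proj_def vec_eq_iff)

lemma density_has_ensemble:
  assumes "density \<rho>"
  obtains m p \<psi> where "ensemble \<rho> m p \<psi>"
proof -
  obtain m :: nat and W where W: "\<forall>l<m. W l \<noteq> 0" "\<rho> = (\<Sum>l<m. proj (W l))"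
    using assms psd_eq_sum_proj_on_rows[of \<rho> UNIV] by (auto simp: density_def)
  define p where "p l = (norm (W l))\<^sup>2" for l
  define \<psi> where "\<psi> l = (1 / norm (W l)) *\<^sub>R W l" for l
  have "complex_of_real (\<Sum>l<m. p l) = trace \<rho>"
    by (simp only: W(2) trace_sum trace_proj p_def of_real_sum)
  then have "(\<Sum>l<m. p l) = 1"
    using assms by (metis density_def of_real_eq_1_iff)
  moreover have "p l *\<^sub>R proj (\<psi> l) = proj (W l)" if "l < m" for l
    using W(1) that by (simp add: p_def \<psi>_def proj_scaleR power2_eq_square)
  moreover have "norm (\<psi> l) = 1" if "l < m" for l
    using W(1) that by (simp add: \<psi>_def)
  ultimately have "ensemble \<rho> m p \<psi>"
    using W(2) by (simp add: ensemble_def p_def)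
  then show thesis
    by (rule that)
qed

lemma power2_norm_diff_cinner_smult:
  assumes x: "norm x = 1" and y: "norm y = 1"
  shows "(norm (x - cinner y x *s y))\<^sup>2 = 1 - (cmod (cinner y x))\<^sup>2"
proof -
  have "complex_of_real ((norm (x - cinner y x *s y))\<^sup>2)
      = 1 - complex_of_real ((cmod (cinner y x))\<^sup>2)"
    by (simp add: cinner_self[symmetric] cinner_diff_left cinner_diff_right cinner_smult_left
        cinner_smult_right cinner_self_unit[OF x] cinner_self_unit[OF y] cnj_cinner
        complex_norm_square algebra_simps del: of_real_power)
  then show ?thesis
    by (metis of_real_1 of_real_diff of_real_eq_iff)
qed

(* Pairing with u gives 1 = (sum l<m. p l * |cinner u (psi l)|^2), and each
   |cinner u (psi l)| <= 1, so Cauchy-Schwarz is an equality for every psi l with p l > 0. *)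
lemma ensemble_pure_state_phase:
  assumes u: "norm u = 1" and ens: "ensemble (proj u) m p \<psi>" and l: "l < m" "p l > 0"
  shows "\<exists>c. cmod c = 1 \<and> \<psi> l = c *s u"
proof -
  have p: "\<And>l. l < m \<Longrightarrow> 0 \<le> p l" and \<psi>: "\<And>l. l < m \<Longrightarrow> norm (\<psi> l) = 1"
    and p1: "(\<Sum>l<m. p l) = 1" and proj_u: "proj u = (\<Sum>l<m. p l *\<^sub>R proj (\<psi> l))"
    using ens by (auto simp: ensemble_def)
  define c where "c l = cinner u (\<psi> l)" for l
  have dist: "(norm (\<psi> l - c l *s u))\<^sup>2 = 1 - (cmod (c l))\<^sup>2" if "l < m" for l
    unfolding c_def by (rule power2_norm_diff_cinner_smult[OF \<psi>[OF that] u])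
  have "complex_of_real (\<Sum>l<m. p l * (cmod (c l))\<^sup>2) = cinner u (proj u *v u)"
    by (simp add: proj_u sum_matrix_mult_vec scaleR_matrix_mult_vec cinner_sum_right
        cinner_scaleR_right cinner_mult_vec_proj cmod_cinner_commute[of u] c_def)
  also have "\<dots> = 1"
    by (simp add: cinner_mult_vec_proj cinner_self_unit[OF u])
  finally have "(\<Sum>l<m. p l * (1 - (cmod (c l))\<^sup>2)) = 0"
    using p1 by (simp add: right_diff_distrib sum_subtractf del: of_real_sum)
  moreover have "0 \<le> p l * (1 - (cmod (c l))\<^sup>2)" if "l < m" for l
    using p[OF that] dist[OF that] by (metis zero_le_mult_iff zero_le_power2)
  ultimately have "p l * (1 - (cmod (c l))\<^sup>2) = 0"
    using l(1) sum_nonneg_eq_0_iff[of "{..<m}" "\<lambda>l. p l * (1 - (cmod (c l))\<^sup>2)"] by simp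
  then have "cmod (c l) = 1"
    using l(2) norm_ge_zero[of "c l"] by (auto simp: power2_eq_1_iff)
  moreover have "\<psi> l = c l *s u"
    using dist[OF l(1)] \<open>cmod (c l) = 1\<close> by simp
  ultimately show ?thesis
    by blast
qed

lemma ensemble_average_pure_state:
  assumes u: "norm u = 1" and ens: "ensemble (proj u) m p \<psi>"
    and phase: "\<And>c. cmod c = 1 \<Longrightarrow> F (c *s u) = F u"
  shows "(\<Sum>l<m. p l * F (\<psi> l)) = F u"
proof -
  have "p l * F (\<psi> l) = p l * F u" if "l < m" for l
  proof (cases "p l = 0")
    case False
    then have "0 < p l"
      using ens that by (simp add: ensemble_def order_less_le)
    then show ?thesis
      using ensemble_pure_state_phase[OF u ens that] phase by auto
  qed simp
  then have "(\<Sum>l<m. p l * F (\<psi> l)) = (\<Sum>l<m. p l) * F u"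
    unfolding sum_distrib_right by (intro sum.cong) simp_all
  then show ?thesis
    using ens by (simp add: ensemble_def)
qed

section \<open>Bounds on the measure C\<close>

lemma Cmeas_eq_Inf_pure_qfi:
  "Cmeas Z \<rho> \<theta> = Inf {(\<Sum>l<m. p l * pure_qfi Z (\<psi> l) \<theta>) | m p \<psi>. ensemble \<rho> m p \<psi>}"
  by (simp add: Cmeas_def pure_qfi_def)

lemma Cmeas_bounds:
  fixes Z :: "'n::finite \<Rightarrow> complex^'n^'n"
  assumes herm: "\<And>j. hermitian (Z j)" and diag: "\<And>j. diagonal_op (Z j)"
    and orth: "\<And>j k. trace (Z j ** Z k) = (if j = k then 1 else 0)"
    and "density \<rho>"
  shows "0 \<le> Cmeas Z \<rho> \<theta> \<and> Cmeas Z \<rho> \<theta> \<le> 4 * (real CARD('n) - 1) / (real CARD('n))\<^sup>2"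
proof -
  define M where "M = 4 * (real CARD('n) - 1) / (real CARD('n))\<^sup>2"
  define S where "S = {(\<Sum>l<m. p l * pure_qfi Z (\<psi> l) \<theta>) | m p \<psi>. ensemble \<rho> m p \<psi>}"
  have S: "0 \<le> x \<and> x \<le> M" if "x \<in> S" for x
  proof -
    obtain m p \<psi> where x: "x = (\<Sum>l<m. p l * pure_qfi Z (\<psi> l) \<theta>)" and ens: "ensemble \<rho> m p \<psi>"
      using \<open>x \<in> S\<close> unfolding S_def by blast
    have p: "\<And>l. l < m \<Longrightarrow> 0 \<le> p l" and \<psi>: "\<And>l. l < m \<Longrightarrow> norm (\<psi> l) = 1"
      and p1: "(\<Sum>l<m. p l) = 1"
      using ens by (auto simp: ensemble_def)
    note F = pure_qfi_bounds[OF herm diag orth \<psi>, folded M_def]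
    have "0 \<le> x"
      unfolding x using p F by (intro sum_nonneg) simp
    moreover have "x \<le> (\<Sum>l<m. p l * M)"
      unfolding x using p F by (intro sum_mono mult_left_mono) simp_all
    ultimately show ?thesis
      using p1 by (simp add: sum_distrib_right[symmetric])
  qed
  obtain m p \<psi> where "ensemble \<rho> m p \<psi>"
    using density_has_ensemble[OF \<open>density \<rho>\<close>] .
  then have "S \<noteq> {}"
    unfolding S_def by blast
  then have "0 \<le> Inf S \<and> Inf S \<le> M"
    using S by (meson bdd_below_def cInf_greatest cInf_lower2 ex_in_conv)
  then show ?thesis
    by (simp add: Cmeas_eq_Inf_pure_qfi S_def M_def)
qed

lemma Cmeas_proj_unit:
  assumes u: "norm u = 1"
    and phase: "\<And>c. cmod c = 1 \<Longrightarrow> pure_qfi Z (c *s u) \<theta> = pure_qfi Z u \<theta>"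
  shows "Cmeas Z (proj u) \<theta> = pure_qfi Z u \<theta>"
proof -
  have "ensemble (proj u) 1 (\<lambda>_. 1) (\<lambda>_. u)"
    using u by (simp add: ensemble_def)
  then have "{(\<Sum>l<m. p l * pure_qfi Z (\<psi> l) \<theta>) | m p \<psi>. ensemble (proj u) m p \<psi>}
      = {pure_qfi Z u \<theta>}"
    using ensemble_average_pure_state[OF u _ phase] by force
  then show ?thesis
    by (simp add: Cmeas_eq_Inf_pure_qfi)
qed

lemma Cmeas_uniform_superposition:
  fixes Z :: "'n::finite \<Rightarrow> complex^'n^'n" and \<phi> :: "'n \<Rightarrow> real"
  assumes herm: "\<And>j. hermitian (Z j)" and diag: "\<And>j. diagonal_op (Z j)"
    and orth: "\<And>j k. trace (Z j ** Z k) = (if j = k then 1 else 0)"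
  defines "u \<equiv> \<chi> j. cis (\<phi> j) / complex_of_real (sqrt (real CARD('n)))"
  shows "Cmeas Z (proj u) \<theta> = 4 * (real CARD('n) - 1) / (real CARD('n))\<^sup>2"
proof -
  define n where "n = real CARD('n)"
  have n: "0 < n"
    by (simp add: n_def)
  have cmod_u: "(cmod (u $ a))\<^sup>2 = 1 / n" for a
    by (simp add: u_def n_def norm_divide power_divide)
  have u: "norm u = 1"
    using n by (simp add: norm_vec_def L2_set_def cmod_u n_def)
  have F: "pure_qfi Z (c *s u) \<theta> = 4 * (n - 1) / n\<^sup>2" if "cmod c = 1" for c
  proof -
    have "norm (c *s u) = 1"
      using u that by (simp add: norm_vec_def norm_mult)
    then show ?thesis
      using n that by (simp add: pure_qfi_eq[OF herm diag orth] norm_mult power_mult_distrib cmod_u)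
        (simp add: n_def field_simps power2_eq_square)
  qed
  have Fu: "pure_qfi Z u \<theta> = 4 * (n - 1) / n\<^sup>2"
    using F[of 1] by simp
  have "Cmeas Z (proj u) \<theta> = pure_qfi Z u \<theta>"
    by (rule Cmeas_proj_unit[OF u]) (simp only: F Fu)
  then show ?thesis
    by (simp add: Fu n_def)
qed

theorem mainTheorem8:
  fixes Z :: "'n::finite \<Rightarrow> complex^'n^'n"
  assumes herm: "\<And>j. hermitian (Z j)"
    and diag: "\<And>j. diagonal_op (Z j)"
    and orth: "\<And>j k. trace (Z j ** Z k) = (if j = k then 1 else 0)"
  shows "(\<forall>\<rho> \<theta>. density \<rho> \<longrightarrow>
            0 \<le> Cmeas Z \<rho> \<theta> \<and>
            Cmeas Z \<rho> \<theta> \<le> 4 * (real CARD('n) - 1) / (real CARD('n))^2) \<and>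
         (\<forall>(\<phi>::'n \<Rightarrow> real) \<theta>.
            Cmeas Z (proj (\<chi> j. cis (\<phi> j) / complex_of_real (sqrt (real CARD('n))))) \<theta>
              = 4 * (real CARD('n) - 1) / (real CARD('n))^2)"
  using Cmeas_bounds[OF herm diag orth] Cmeas_uniform_superposition[OF herm diag orth] by blast

end
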